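(* Let $E\subset\mathbb T$ be an infinite set and $K_1\subset\mathbb T$ a compact set with $\overline{E}\cap K_1=\emptyset$. Let $$\mathcal R=\Big\{c_0+i\sum_{k=1}^n c_k\frac{e^{i\psi_k}+z}{e^{i\psi_k}-z}\ :\ n\in\mathbb N,\ c_0,c_1,\dots,c_n\in\mathbb R,\ e^{i\psi_k}\in E\ (1\le k\le n)\Big\}.$$ Then each element of $\mathcal R$ is real-valued on $K_1$, and the set of restrictions $\{r_{|_{K_1}}: r\in\mathcal R\}$ is uniformly dense in $C_{\mathbb R}(K_1)$, the space of real-valued continuous functions on $K_1$.
   Context: $\mathbb T$ is the unit circle in $\mathbb C$; $z$ denotes the complex variable. *)

theory Defs
  imports "HOL-Analysis.Analysis"
begin

definition herglotz_class :: "complex set \<Rightarrow> (complex \<Rightarrow> complex) set" where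
  "herglotz_class E = {r. \<exists>(n::nat) (c::nat \<Rightarrow> real) (e::nat \<Rightarrow> complex).
      (\<forall>k\<in>{1..n}. e k \<in> E) \<and>
      r = (\<lambda>z. complex_of_real (c 0) +
              \<i> * (\<Sum>k=1..n. complex_of_real (c k) * ((e k + z) / (e k - z))))}"

end

theory Submission
  imports Defs
begin

(* Real-valuedness is immediate: for a, z on the unit circle the quotient
   (a + z) / (a - z) is purely imaginary.

   For density, pick a limit point a of the infinite set E on the circle; a is not in
   K1.  The Cayley coordinate t(z) = i (a + z) / (a - z) is real, continuous and
   injective on K1.  For a pole w in E with s = t(w), the kernel i (w + z) / (w - z)
   equals (s t + 1) / (s - t) on K1, and |s| is unbounded as w tends to a.

   The rest is abstract: in a uniformly closed space A of real functions containing the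
   constants, if (s t + 1) / (s - t) lies in A for arbitrarily large |s|, then every
   power of t lies in A (expand 1 / (s - t) geometrically and let |s| grow), and the
   Stone-Weierstrass theorem for polynomials in t yields all continuous functions. *)

definition herglotz_fun :: "nat \<Rightarrow> (nat \<Rightarrow> real) \<Rightarrow> (nat \<Rightarrow> complex) \<Rightarrow> complex \<Rightarrow> complex" where
  "herglotz_fun n c e z =
     complex_of_real (c 0) + \<i> * (\<Sum>k=1..n. complex_of_real (c k) * ((e k + z) / (e k - z)))"

lemma herglotz_class_iff:
  "r \<in> herglotz_class E \<longleftrightarrow> (\<exists>n c e. (\<forall>k\<in>{1..n}. e k \<in> E) \<and> r = herglotz_fun n c e)"
  unfolding herglotz_class_def herglotz_fun_def[abs_def] by simp

lemma herglotz_class_const: "(\<lambda>z. complex_of_real b) \<in> herglotz_class E"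
  unfolding herglotz_class_iff herglotz_fun_def[abs_def]
  by (intro exI[of _ 0] exI[of _ "\<lambda>_. b"]) simp

lemma herglotz_class_add_const:
  assumes "r \<in> herglotz_class E"
  shows "(\<lambda>z. r z + complex_of_real b) \<in> herglotz_class E"
proof -
  obtain n c e where e: "\<forall>k\<in>{1..n}. e k \<in> E" and r: "r = herglotz_fun n c e"
    using assms unfolding herglotz_class_iff by blast
  have "(\<Sum>k=1..n. complex_of_real ((c(0 := c 0 + b)) k) * ((e k + z) / (e k - z))) =
        (\<Sum>k=1..n. complex_of_real (c k) * ((e k + z) / (e k - z)))" for z
    by (rule sum.cong) auto
  then have "(\<lambda>z. r z + complex_of_real b) = herglotz_fun n (c(0 := c 0 + b)) e"
    by (simp add: r herglotz_fun_def fun_eq_iff)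
  then show ?thesis
    using e unfolding herglotz_class_iff by blast
qed

lemma herglotz_class_add_kernel:
  assumes "r \<in> herglotz_class E" and "w \<in> E"
  shows "(\<lambda>z. r z + \<i> * (complex_of_real b * ((w + z) / (w - z)))) \<in> herglotz_class E"
proof -
  obtain n c e where e: "\<forall>k\<in>{1..n}. e k \<in> E" and r: "r = herglotz_fun n c e"
    using assms(1) unfolding herglotz_class_iff by blast
  have "(\<lambda>z. r z + \<i> * (complex_of_real b * ((w + z) / (w - z)))) =
        herglotz_fun (Suc n) (c(Suc n := b)) (e(Suc n := w))"
    by (simp add: r herglotz_fun_def fun_eq_iff distrib_left)
  moreover have "\<forall>k\<in>{1..Suc n}. (e(Suc n := w)) k \<in> E"
    using e assms(2) by auto
  ultimately show ?thesis
    unfolding herglotz_class_iff by blast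
qed

lemma herglotz_class_add:
  assumes r1: "r1 \<in> herglotz_class E" and r2: "r2 \<in> herglotz_class E"
  shows "(\<lambda>z. r1 z + r2 z) \<in> herglotz_class E"
proof -
  obtain n c e where e: "\<forall>k\<in>{1..n}. e k \<in> E" and r2_eq: "r2 = herglotz_fun n c e"
    using r2 unfolding herglotz_class_iff by blast
  have "(\<lambda>z. r1 z + herglotz_fun m c e z) \<in> herglotz_class E" if "m \<le> n" for m
    using that
  proof (induction m)
    case 0
    then show ?case
      using herglotz_class_add_const[OF r1, of "c 0"] by (simp add: herglotz_fun_def)
  next
    case (Suc m)
    have "herglotz_fun (Suc m) c e z =
          herglotz_fun m c e z + \<i> * (complex_of_real (c (Suc m)) * ((e (Suc m) + z) / (e (Suc m) - z)))"
      for z by (simp add: herglotz_fun_def distrib_left)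
    moreover have "e (Suc m) \<in> E" using e Suc.prems by simp
    ultimately show ?case
      using herglotz_class_add_kernel[OF Suc.IH, of "e (Suc m)" "c (Suc m)"] Suc.prems
      by (simp add: add.assoc)
  qed
  then show ?thesis using r2_eq by simp
qed

lemma herglotz_class_scale:
  assumes "r \<in> herglotz_class E"
  shows "(\<lambda>z. complex_of_real b * r z) \<in> herglotz_class E"
proof -
  obtain n c e where e: "\<forall>k\<in>{1..n}. e k \<in> E" and r: "r = herglotz_fun n c e"
    using assms unfolding herglotz_class_iff by blast
  have "(\<lambda>z. complex_of_real b * r z) = herglotz_fun n (\<lambda>k. b * c k) e"
    by (simp add: r herglotz_fun_def fun_eq_iff sum_distrib_left algebra_simps)
  then show ?thesis using e unfolding herglotz_class_iff by blast
qed

lemma herglotz_class_kernel: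
  assumes "w \<in> E"
  shows "(\<lambda>z. \<i> * ((w + z) / (w - z))) \<in> herglotz_class E"
  using herglotz_class_add_kernel[OF herglotz_class_const assms, of 0 1] by simp

lemma herglotz_kernel_imaginary:
  fixes a z :: complex
  assumes "cmod a = 1" "cmod z = 1"
  shows "Re ((a + z) / (a - z)) = 0"
proof -
  have "(Re a)^2 + (Im a)^2 = 1" "(Re z)^2 + (Im z)^2 = 1"
    using assms cmod_power2[of a] cmod_power2[of z] by simp_all
  then have "Re (a + z) * Re (a - z) + Im (a + z) * Im (a - z) = 0"
    by (simp add: algebra_simps power2_eq_square)
  then show ?thesis by (simp add: Re_divide)
qed

lemma herglotz_class_real_on_circle:
  assumes "E \<subseteq> sphere 0 1" "r \<in> herglotz_class E" "cmod z = 1"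
  shows "Im (r z) = 0"
proof -
  obtain n c e where e: "\<forall>k\<in>{1..n}. e k \<in> E" and r: "r = herglotz_fun n c e"
    using assms(2) unfolding herglotz_class_iff by blast
  have "Re ((e k + z) / (e k - z)) = 0" if "k \<in> {1..n}" for k
  proof -
    have "e k \<in> sphere 0 1" using e that assms(1) by blast
    then show ?thesis using herglotz_kernel_imaginary[OF _ assms(3)] by simp
  qed
  then show ?thesis by (simp add: r herglotz_fun_def Re_sum del: times_divide_eq_right)
qed

lemma mobius_identity:
  fixes a w z :: complex
  assumes "a \<noteq> 0" "w \<noteq> a" "z \<noteq> a" "w \<noteq> z"
  defines "S \<equiv> \<i> * ((a + w) / (a - w))" and "T \<equiv> \<i> * ((a + z) / (a - z))"
  shows "S \<noteq> T" and "\<i> * ((w + z) / (w - z)) = (S * T + 1) / (S - T)"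
proof -
  define P where "P = (a - w) * (a - z)"
  have nz: "a - w \<noteq> 0" "a - z \<noteq> 0" "w - z \<noteq> 0" "P \<noteq> 0"
    using assms(2-4) by (auto simp: P_def)
  have diff: "S - T = 2 * \<i> * a * (w - z) / P"
    unfolding S_def T_def P_def using nz by (simp add: field_simps)
  also have "\<dots> \<noteq> 0" using nz assms(1) by simp
  finally show "S \<noteq> T" by simp
  have "S * T = - ((a + w) * (a + z)) / P"
    unfolding S_def T_def P_def by (simp add: field_simps)
  then have "S * T + 1 = (P - (a + w) * (a + z)) / P"
    using nz by (simp add: field_simps)
  also have "P - (a + w) * (a + z) = - 2 * a * (w + z)"
    by (simp add: P_def algebra_simps)
  finally have "(S * T + 1) / (S - T) = (- 2 * a * (w + z)) / (2 * \<i> * a * (w - z))"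
    unfolding diff using nz by simp
  also have "\<dots> = \<i> * ((w + z) / (w - z))"
    using nz assms(1) by (simp add: field_simps)
  finally show "\<i> * ((w + z) / (w - z)) = (S * T + 1) / (S - T)" ..
qed

(* The Cayley coordinate with base point a, as a real function; on the circle minus a
   it is a bijection onto the real line. *)
definition cayley :: "complex \<Rightarrow> complex \<Rightarrow> real" where
  "cayley a z = Re (\<i> * ((a + z) / (a - z)))"

(* On the circle the Cayley map is real, so nothing is lost by taking Re. *)
lemma cayley_eq:
  assumes "cmod a = 1" "cmod z = 1"
  shows "\<i> * ((a + z) / (a - z)) = complex_of_real (cayley a z)"
  using herglotz_kernel_imaginary[OF assms] by (simp add: cayley_def complex_eq_iff del: times_divide_eq_right)

lemma cayley_kernel:
  assumes "cmod a = 1" "cmod w = 1" "cmod z = 1" "w \<noteq> a" "z \<noteq> a" "w \<noteq> z"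
  shows "cayley a w \<noteq> cayley a z"
    and "\<i> * ((w + z) / (w - z)) =
           complex_of_real ((cayley a w * cayley a z + 1) / (cayley a w - cayley a z))"
proof -
  have "a \<noteq> 0" using assms(1) by auto
  note mob = mobius_identity[OF this assms(4-6), unfolded cayley_eq[OF assms(1,2)] cayley_eq[OF assms(1,3)]]
  from mob(1) show "cayley a w \<noteq> cayley a z" by simp
  from mob(2) show "\<i> * ((w + z) / (w - z)) =
           complex_of_real ((cayley a w * cayley a z + 1) / (cayley a w - cayley a z))" by simp
qed

lemma cayley_continuous: "a \<notin> K \<Longrightarrow> continuous_on K (cayley a)"
  unfolding cayley_def by (intro continuous_intros) auto

lemma cayley_inj_on:
  assumes "cmod a = 1" "K \<subseteq> sphere 0 1" "a \<notin> K"
  shows "inj_on (cayley a) K"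
  using cayley_kernel(1)[OF assms(1)] assms(2,3) by (force simp: inj_on_def)

lemma cayley_lower_bound:
  assumes "cmod a = 1" "cmod w = 1" "w \<noteq> a"
  shows "2 / cmod (a - w) - 1 \<le> \<bar>cayley a w\<bar>"
proof -
  define d where "d = cmod (a - w)"
  have "d > 0" using assms(3) by (simp add: d_def)
  have "2 = cmod ((a + w) + (a - w))" using assms(1) by simp
  also have "\<dots> \<le> cmod (a + w) + d" unfolding d_def by (rule norm_triangle_ineq)
  finally have "(2 - d) / d \<le> cmod (a + w) / d" using \<open>d > 0\<close> by (simp add: divide_right_mono)
  also have "cmod (a + w) / d = \<bar>cayley a w\<bar>"
    using arg_cong[OF cayley_eq[OF assms(1,2)], of cmod] by (simp add: d_def norm_mult norm_divide)
  finally show ?thesis using \<open>d > 0\<close> by (simp add: d_def diff_divide_distrib)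
qed

lemma cayley_unbounded:
  assumes "cmod a = 1" "E \<subseteq> sphere 0 1" "a islimpt E"
  shows "\<exists>w\<in>E. w \<noteq> a \<and> B < \<bar>cayley a w\<bar>"
proof -
  obtain w where w: "w \<in> E" "w \<noteq> a" "dist w a < 2 / (\<bar>B\<bar> + 2)"
    using assms(3) unfolding islimpt_approachable by (metis abs_ge_zero add_nonneg_pos divide_pos_pos zero_less_numeral)
  have "cmod (a - w) > 0" using w(2) by simp
  moreover have "cmod (a - w) < 2 / (\<bar>B\<bar> + 2)" using w(3) by (simp add: dist_norm norm_minus_commute)
  ultimately have "\<bar>B\<bar> + 2 < 2 / cmod (a - w)" by (simp add: field_simps)
  moreover have "2 / cmod (a - w) - 1 \<le> \<bar>cayley a w\<bar>"
    using cayley_lower_bound[OF assms(1) _ w(2)] w(1) assms(2) by auto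
  ultimately show ?thesis using w(1,2) by (intro bexI[of _ w]) auto
qed

lemma quotient_small:
  fixes c x s C M d :: real
  assumes "\<bar>x\<bar> \<le> M" "\<bar>c\<bar> \<le> C" "d > 0" "\<bar>s\<bar> > M + C / d"
  shows "\<bar>c / (s - x)\<bar> < d"
proof -
  have "C / d < \<bar>s - x\<bar>" using assms(1,4) by linarith
  then have "\<bar>c\<bar> < d * \<bar>s - x\<bar>" using assms(2,3) by (simp add: divide_less_eq mult.commute)
  moreover have "\<bar>s - x\<bar> > 0" using \<open>C / d < \<bar>s - x\<bar>\<close> assms(2,3) by (smt (verit) divide_nonneg_pos)
  ultimately show ?thesis by (simp add: divide_less_eq mult.commute)
qed

(* Truncated geometric expansion of 1 / (s - x), multiplied by 1 + x^2 and rescaled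
   by s^(j+1); it drives the induction in power_step. *)
lemma resolvent_expansion:
  fixes s x :: real
  assumes "s \<noteq> 0" "s \<noteq> x"
  shows "s ^ (j + 1) * ((1 + x^2) / (s - x) - (\<Sum>m<j. (x^m + x^(m + 2)) / s^(m + 1)))
       = (1 + x^2) * x^j * s / (s - x)"
proof (induction j)
  case 0
  then show ?case by simp
next
  case (Suc j)
  define S where "S = (\<Sum>m<j. (x^m + x^(m + 2)) / s^(m + 1))"
  define T where "T = (x^j + x^(j + 2)) / s^(j + 1)"
  have sum_Suc: "(\<Sum>m<Suc j. (x^m + x^(m + 2)) / s^(m + 1)) = S + T"
    by (simp add: S_def T_def)
  have T: "x^j + x^(j + 2) = s^(j + 1) * T"
    using assms(1) by (simp add: T_def)
  have "s ^ (Suc j + 1) * ((1 + x^2) / (s - x) - (\<Sum>m<Suc j. (x^m + x^(m + 2)) / s^(m + 1)))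
      = s * (s ^ (j + 1) * ((1 + x^2) / (s - x) - S)) - s * (x^j + x^(j + 2))"
    unfolding sum_Suc T by (simp add: algebra_simps)
  also have "\<dots> = s * ((1 + x^2) * x^j * s / (s - x) - (1 + x^2) * x^j)"
    unfolding Suc.IH[folded S_def] by (simp add: algebra_simps power2_eq_square power_add)
  also have "\<dots> = (1 + x^2) * x^Suc j * s / (s - x)"
    using assms(2) by (simp add: field_simps)
  finally show ?case .
qed

(* These are the only properties of the
   approximable functions that the density argument uses. *)
locale uniformly_closed_subspace =
  fixes K :: "'a::topological_space set" and A :: "('a \<Rightarrow> real) set"
  assumes const: "(\<lambda>_. c) \<in> A"
    and add: "f \<in> A \<Longrightarrow> g \<in> A \<Longrightarrow> (\<lambda>x. f x + g x) \<in> A"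
    and scale: "f \<in> A \<Longrightarrow> (\<lambda>x. c * f x) \<in> A"
    and closed: "(\<And>d. d > 0 \<Longrightarrow> \<exists>f\<in>A. \<forall>x\<in>K. \<bar>f x - g x\<bar> < d) \<Longrightarrow> g \<in> A"
begin

lemma cong: "f \<in> A \<Longrightarrow> (\<And>x. x \<in> K \<Longrightarrow> f x = g x) \<Longrightarrow> g \<in> A"
  by (rule closed, rule bexI[of _ f]) auto

lemma diff: "f \<in> A \<Longrightarrow> g \<in> A \<Longrightarrow> (\<lambda>x. f x - g x) \<in> A"
  using add[OF _ scale[of g "-1"]] by simp

lemma divide: "f \<in> A \<Longrightarrow> (\<lambda>x. f x / c) \<in> A"
  using scale[of f "inverse c"] by (simp add: field_simps)

lemma sum: "finite I \<Longrightarrow> (\<And>i. i \<in> I \<Longrightarrow> f i \<in> A) \<Longrightarrow> (\<lambda>x. \<Sum>i\<in>I. f i x) \<in> A"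
  by (induction I rule: finite_induct) (auto intro: add const[of 0, simplified])

(* If the Moebius functions (s t + 1) / (s - t) lie in A for arbitrarily large |s|,
   then so does their uniform limit t, and hence also the differences
   (1 + t^2) / (s - t). *)
lemma resolvents_mem:
  assumes bnd: "\<forall>x\<in>K. \<bar>t x\<bar> \<le> M"
    and mob: "\<And>B. \<exists>s. \<bar>s\<bar> > B \<and> (\<forall>x\<in>K. t x \<noteq> s) \<and> (\<lambda>x. (s * t x + 1) / (s - t x)) \<in> A"
  shows "t \<in> A" and "\<exists>s. \<bar>s\<bar> > B \<and> (\<lambda>x. (1 + t x^2) / (s - t x)) \<in> A"
proof -
  have mob_minus_t: "(s * t x + 1) / (s - t x) - t x = (1 + t x^2) / (s - t x)" if "t x \<noteq> s" for s x
    using that by (simp add: field_simps power2_eq_square)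
  show "t \<in> A"
  proof (rule closed)
    fix d :: real assume "d > 0"
    obtain s where s: "\<bar>s\<bar> > M + (1 + M^2) / d" "\<forall>x\<in>K. t x \<noteq> s"
      and mem: "(\<lambda>x. (s * t x + 1) / (s - t x)) \<in> A"
      using mob by blast
    have close: "\<forall>x\<in>K. \<bar>(s * t x + 1) / (s - t x) - t x\<bar> < d"
    proof
      fix x assume "x \<in> K"
      have "\<bar>t x\<bar> \<le> M" using bnd \<open>x \<in> K\<close> by blast
      then have "t x^2 \<le> M^2" by (metis abs_ge_zero power2_abs power_mono)
      then have "\<bar>1 + t x^2\<bar> \<le> 1 + M^2" by simp
      then have "\<bar>(1 + t x^2) / (s - t x)\<bar> < d"
        using quotient_small[OF \<open>\<bar>t x\<bar> \<le> M\<close> _ \<open>d > 0\<close> s(1)] by blast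
      moreover have "t x \<noteq> s" using s(2) \<open>x \<in> K\<close> by blast
      ultimately show "\<bar>(s * t x + 1) / (s - t x) - t x\<bar> < d" by (metis mob_minus_t)
    qed
    show "\<exists>f\<in>A. \<forall>x\<in>K. \<bar>f x - t x\<bar> < d"
      using close mem by (intro bexI[of _ "\<lambda>x. (s * t x + 1) / (s - t x)"])
  qed
  obtain s where s: "\<bar>s\<bar> > B" "\<forall>x\<in>K. t x \<noteq> s"
    and mem: "(\<lambda>x. (s * t x + 1) / (s - t x)) \<in> A"
    using mob by blast
  have "(\<lambda>x. (1 + t x^2) / (s - t x)) \<in> A"
    by (rule cong[OF diff[OF mem \<open>t \<in> A\<close>]], rule mob_minus_t) (use s(2) in blast)
  then show "\<exists>s. \<bar>s\<bar> > B \<and> (\<lambda>x. (1 + t x^2) / (s - t x)) \<in> A"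
    using s(1) by blast
qed

lemma power_step:
  assumes bnd: "\<forall>x\<in>K. \<bar>t x\<bar> \<le> M" and "M \<ge> 0"
    and res: "\<And>B. \<exists>s. \<bar>s\<bar> > B \<and> (\<lambda>x. (1 + t x^2) / (s - t x)) \<in> A"
    and lower: "\<And>m. m < j + 2 \<Longrightarrow> (\<lambda>x. t x ^ m) \<in> A"
  shows "(\<lambda>x. t x ^ j + t x ^ (j + 2)) \<in> A"
proof (rule closed)
  fix d :: real assume "d > 0"
  define C where "C = (1 + M^2) * M^(j + 1)"
  obtain s where s: "\<bar>s\<bar> > M + C / d" and mem: "(\<lambda>x. (1 + t x^2) / (s - t x)) \<in> A"
    using res by blast
  have "C \<ge> 0" using \<open>M \<ge> 0\<close> by (simp add: C_def)
  then have "s \<noteq> 0" using s \<open>M \<ge> 0\<close> \<open>d > 0\<close> by (smt (verit) divide_nonneg_pos)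
  define h where "h = (\<lambda>x. s ^ (j + 1) *
      ((1 + t x^2) / (s - t x) - (\<Sum>m<j. (t x^m + t x^(m + 2)) / s^(m + 1))))"
  have "h \<in> A"
    unfolding h_def by (intro scale diff mem sum divide add lower) auto
  moreover have "\<bar>h x - (t x ^ j + t x ^ (j + 2))\<bar> < d" if "x \<in> K" for x
  proof -
    have x: "\<bar>t x\<bar> \<le> M" using bnd that by blast
    have "s \<noteq> t x" using x s \<open>C \<ge> 0\<close> \<open>d > 0\<close> by (smt (verit) divide_nonneg_pos)
    then have "h x - (t x ^ j + t x ^ (j + 2)) = (1 + t x^2) * t x^(j + 1) / (s - t x)"
      unfolding h_def resolvent_expansion[OF \<open>s \<noteq> 0\<close> \<open>s \<noteq> t x\<close>] by (simp add: field_simps power2_eq_square)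
    moreover have "\<bar>(1 + t x^2) * t x^(j + 1)\<bar> \<le> C"
    proof -
      have "\<bar>(1 + t x^2) * t x^(j + 1)\<bar> = (1 + \<bar>t x\<bar>^2) * \<bar>t x\<bar>^(j + 1)"
        by (simp add: abs_mult power_abs)
      also have "\<dots> \<le> C"
        unfolding C_def using x by (intro mult_mono add_left_mono power_mono) auto
      finally show ?thesis .
    qed
    ultimately show ?thesis
      using quotient_small[OF x _ \<open>d > 0\<close> s] by simp
  qed
  ultimately show "\<exists>f\<in>A. \<forall>x\<in>K. \<bar>f x - (t x ^ j + t x ^ (j + 2))\<bar> < d" by blast
qed

lemma powers_mem:
  assumes bnd: "\<forall>x\<in>K. \<bar>t x\<bar> \<le> M" and "M \<ge> 0"
    and mob: "\<And>B. \<exists>s. \<bar>s\<bar> > B \<and> (\<forall>x\<in>K. t x \<noteq> s) \<and> (\<lambda>x. (s * t x + 1) / (s - t x)) \<in> A"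
  shows "(\<lambda>x. t x ^ n) \<in> A"
proof (induction n rule: less_induct)
  case (less n)
  consider "n = 0" | "n = 1" | j where "n = j + 2"
    by (metis One_nat_def add_2_eq_Suc' not0_implies_Suc)
  then show ?case
  proof cases
    case 1
    then show ?thesis using const by simp
  next
    case 2
    then show ?thesis using resolvents_mem(1)[OF bnd mob] by simp
  next
    case 3
    have "(\<lambda>x. (t x ^ j + t x ^ (j + 2)) - t x ^ j) \<in> A"
      using power_step[OF bnd \<open>M \<ge> 0\<close> resolvents_mem(2)[OF bnd mob]] less 3
      by (intro diff) auto
    then show ?thesis using 3 by simp
  qed
qed

(* Transport f
   to t ` K, approximate it there by a real polynomial and pull back along t. *)
lemma continuous_mem:
  assumes "compact K" and t: "continuous_on K t" "inj_on t K"
    and powers: "\<And>n. (\<lambda>x. t x ^ n) \<in> A"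
    and f: "continuous_on K f"
  shows "f \<in> A"
proof (rule closed)
  fix e :: real assume "e > 0"
  have "continuous_on (t ` K) (f \<circ> the_inv_into K t)"
    using continuous_on_inv_into[OF t(1) \<open>compact K\<close> t(2)] f the_inv_into_onto[OF t(2)]
    by (metis continuous_on_compose)
  then obtain g where "real_polynomial_function g"
    and g: "\<And>y. y \<in> t ` K \<Longrightarrow> \<bar>(f \<circ> the_inv_into K t) y - g y\<bar> < e"
    using Stone_Weierstrass_real_polynomial_function compact_continuous_image[OF t(1) \<open>compact K\<close>]
      \<open>e > 0\<close> by metis
  then obtain a n where g_eq: "g = (\<lambda>y. \<Sum>i\<le>n. a i * y^i)"
    using real_polynomial_function_iff_sum by blast
  have "(\<lambda>x. g (t x)) \<in> A"
    unfolding g_eq by (intro sum scale powers) auto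
  moreover have "\<bar>g (t x) - f x\<bar> < e" if "x \<in> K" for x
    using g[of "t x"] that by (simp add: the_inv_into_f_f[OF t(2)] abs_minus_commute)
  ultimately show "\<exists>h\<in>A. \<forall>x\<in>K. \<bar>h x - f x\<bar> < e"
    by (intro bexI[of _ "\<lambda>x. g (t x)"] ballI)
qed

end

definition herglotz_approx :: "complex set \<Rightarrow> complex set \<Rightarrow> (complex \<Rightarrow> real) set" where
  "herglotz_approx E K =
     {h. \<forall>d>0. \<exists>r\<in>herglotz_class E. \<forall>z\<in>K. cmod (r z - complex_of_real (h z)) < d}"

lemma herglotz_approx_subspace: "uniformly_closed_subspace K (herglotz_approx E K)"
proof
  show "(\<lambda>_. c) \<in> herglotz_approx E K" for c
    unfolding herglotz_approx_def using herglotz_class_const[of c E]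
    by (intro CollectI allI impI bexI[of _ "\<lambda>z. complex_of_real c"]) auto
next
  fix f g assume f: "f \<in> herglotz_approx E K" and g: "g \<in> herglotz_approx E K"
  show "(\<lambda>z. f z + g z) \<in> herglotz_approx E K"
    unfolding herglotz_approx_def
  proof (intro CollectI allI impI)
    fix d :: real assume "d > 0"
    then obtain r1 r2 where r: "r1 \<in> herglotz_class E" "r2 \<in> herglotz_class E"
      and r1: "\<forall>z\<in>K. cmod (r1 z - complex_of_real (f z)) < d / 2"
      and r2: "\<forall>z\<in>K. cmod (r2 z - complex_of_real (g z)) < d / 2"
      using f g half_gt_zero[OF \<open>d > 0\<close>] unfolding herglotz_approx_def mem_Collect_eq by blast
    have "cmod (r1 z + r2 z - complex_of_real (f z + g z)) < d" if "z \<in> K" for z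
    proof -
      have "r1 z + r2 z - complex_of_real (f z + g z) =
            (r1 z - complex_of_real (f z)) + (r2 z - complex_of_real (g z))"
        by simp
      also have "cmod \<dots> < d / 2 + d / 2"
        using r1 r2 that by (intro norm_add_less) auto
      finally show ?thesis by simp
    qed
    then show "\<exists>r\<in>herglotz_class E. \<forall>z\<in>K. cmod (r z - complex_of_real (f z + g z)) < d"
      using herglotz_class_add[OF r] by (intro bexI[of _ "\<lambda>z. r1 z + r2 z"] ballI)
  qed
next
  fix f and c :: real assume f: "f \<in> herglotz_approx E K"
  show "(\<lambda>z. c * f z) \<in> herglotz_approx E K"
    unfolding herglotz_approx_def
  proof (intro CollectI allI impI)
    fix d :: real assume "d > 0"
    then have "d / (\<bar>c\<bar> + 1) > 0" by simp
    then obtain r where r: "r \<in> herglotz_class E"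
      and close: "\<forall>z\<in>K. cmod (r z - complex_of_real (f z)) < d / (\<bar>c\<bar> + 1)"
      using f unfolding herglotz_approx_def mem_Collect_eq by blast
    have "cmod (complex_of_real c * r z - complex_of_real (c * f z)) < d" if "z \<in> K" for z
    proof -
      have "cmod (complex_of_real c * r z - complex_of_real (c * f z)) =
            \<bar>c\<bar> * cmod (r z - complex_of_real (f z))"
        by (simp add: right_diff_distrib[symmetric] norm_mult)
      also have "\<dots> \<le> (\<bar>c\<bar> + 1) * cmod (r z - complex_of_real (f z))"
        by (simp add: mult_right_mono)
      also have "\<dots> < (\<bar>c\<bar> + 1) * (d / (\<bar>c\<bar> + 1))"
        using close that by (intro mult_strict_left_mono) auto
      finally show ?thesis by simp
    qed
    then show "\<exists>r\<in>herglotz_class E. \<forall>z\<in>K. cmod (r z - complex_of_real (c * f z)) < d"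
      using herglotz_class_scale[OF r] by (intro bexI[of _ "\<lambda>z. complex_of_real c * r z"] ballI)
  qed
next
  fix g assume approx: "\<And>d. d > 0 \<Longrightarrow> \<exists>f\<in>herglotz_approx E K. \<forall>z\<in>K. \<bar>f z - g z\<bar> < d"
  show "g \<in> herglotz_approx E K"
    unfolding herglotz_approx_def
  proof (intro CollectI allI impI)
    fix d :: real assume "d > 0"
    then obtain f where f: "f \<in> herglotz_approx E K" and fg: "\<forall>z\<in>K. \<bar>f z - g z\<bar> < d / 2"
      using approx half_gt_zero by blast
    then obtain r where r: "r \<in> herglotz_class E"
      and rf: "\<forall>z\<in>K. cmod (r z - complex_of_real (f z)) < d / 2"
      using half_gt_zero[OF \<open>d > 0\<close>] unfolding herglotz_approx_def mem_Collect_eq by blast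
    have "cmod (r z - complex_of_real (g z)) < d" if "z \<in> K" for z
    proof -
      have "r z - complex_of_real (g z) = (r z - complex_of_real (f z)) + complex_of_real (f z - g z)"
        by simp
      also have "cmod \<dots> < d / 2 + d / 2"
        using rf fg that by (intro norm_add_less) (auto simp only: norm_of_real)
      finally show ?thesis by simp
    qed
    then show "\<exists>r\<in>herglotz_class E. \<forall>z\<in>K. cmod (r z - complex_of_real (g z)) < d"
      using r by (intro bexI[of _ r] ballI)
  qed
qed

(* For a pole w in E off K, the Moebius function of the Cayley coordinate with
   parameter s = cayley a w is approximable on K: it is the restriction of a kernel. *)
lemma cayley_mobius_in_herglotz_approx:
  assumes "cmod a = 1" "K \<subseteq> sphere 0 1" "a \<notin> K" "w \<in> E" "w \<in> sphere 0 1" "w \<noteq> a" "w \<notin> K"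
  shows "\<forall>z\<in>K. cayley a z \<noteq> cayley a w"
    and "(\<lambda>z. (cayley a w * cayley a z + 1) / (cayley a w - cayley a z)) \<in> herglotz_approx E K"
proof -
  have z: "cmod z = 1" "z \<noteq> a" "w \<noteq> z" if "z \<in> K" for z
    using that assms(2,3,7) by auto
  show "\<forall>z\<in>K. cayley a z \<noteq> cayley a w"
    using cayley_kernel(1)[OF assms(1) _ _ assms(6)] z assms(5) by force
  have "\<i> * ((w + z) / (w - z)) =
          complex_of_real ((cayley a w * cayley a z + 1) / (cayley a w - cayley a z))" if "z \<in> K" for z
    using cayley_kernel(2)[OF assms(1) _ _ assms(6)] z[OF that] assms(5) by simp
  then show "(\<lambda>z. (cayley a w * cayley a z + 1) / (cayley a w - cayley a z)) \<in> herglotz_approx E K"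
    unfolding herglotz_approx_def using herglotz_class_kernel[OF assms(4)] by force
qed

theorem mainTheorem5:
  fixes E K1 :: "complex set"
  assumes "E \<subseteq> sphere 0 1" and "infinite E"
    and "K1 \<subseteq> sphere 0 1" and "compact K1"
    and "closure E \<inter> K1 = {}"
  shows "(\<forall>r\<in>herglotz_class E. \<forall>z\<in>K1. Im (r z) = 0) \<and>
         (\<forall>f :: complex \<Rightarrow> real. continuous_on K1 f \<longrightarrow>
            (\<forall>\<epsilon>>0. \<exists>r\<in>herglotz_class E. \<forall>z\<in>K1. cmod (r z - complex_of_real (f z)) < \<epsilon>))"
proof -
  (* base point of the Cayley coordinate: a limit point of E, which lies off K1 *)
  obtain a where a: "a \<in> sphere 0 1" "a islimpt E"
    using Heine_Borel_imp_Bolzano_Weierstrass[OF compact_sphere assms(2,1)] by blast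
  have "cmod a = 1" using a(1) by simp
  have "a \<notin> K1" using a(2) assms(5) by (auto simp: closure_def)
  have E_off_K1: "w \<notin> K1" if "w \<in> E" for w
    using that assms(5) closure_subset by blast
  interpret uniformly_closed_subspace K1 "herglotz_approx E K1"
    by (rule herglotz_approx_subspace)
  obtain M where "M > 0" and M: "\<forall>z\<in>K1. \<bar>cayley a z\<bar> \<le> M"
    using compact_imp_bounded[OF compact_continuous_image[OF cayley_continuous[OF \<open>a \<notin> K1\<close>] assms(4)]]
    unfolding bounded_pos by auto
  (* the kernels with poles in E provide Moebius functions of t with arbitrarily large |s| *)
  have "\<exists>s. \<bar>s\<bar> > B \<and> (\<forall>z\<in>K1. cayley a z \<noteq> s) \<and>
          (\<lambda>z. (s * cayley a z + 1) / (s - cayley a z)) \<in> herglotz_approx E K1" for B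
    using cayley_unbounded[OF \<open>cmod a = 1\<close> assms(1) a(2), of B] assms(1)
      cayley_mobius_in_herglotz_approx[OF \<open>cmod a = 1\<close> assms(3) \<open>a \<notin> K1\<close>] E_off_K1 by blast
  then have "(\<lambda>z. cayley a z ^ n) \<in> herglotz_approx E K1" for n
    using powers_mem[OF M] \<open>M > 0\<close> by simp
  then have dense: "f \<in> herglotz_approx E K1" if "continuous_on K1 f" for f
    using continuous_mem[OF assms(4) cayley_continuous[OF \<open>a \<notin> K1\<close>]
        cayley_inj_on[OF \<open>cmod a = 1\<close> assms(3) \<open>a \<notin> K1\<close>] _ that] by blast
  show ?thesis
  proof (intro conjI ballI allI impI)
    fix r z assume "r \<in> herglotz_class E" "z \<in> K1"
    then show "Im (r z) = 0" using herglotz_class_real_on_circle[OF assms(1)] assms(3) by auto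
  next
    fix f :: "complex \<Rightarrow> real" and \<epsilon> :: real assume "continuous_on K1 f" "\<epsilon> > 0"
    then show "\<exists>r\<in>herglotz_class E. \<forall>z\<in>K1. cmod (r z - complex_of_real (f z)) < \<epsilon>"
      using dense unfolding herglotz_approx_def by blast
  qed
qed

end
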